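(* For all integers $n\ge 2$, $1\le r\le n$ and $0\le k\le n-2$, $$N_k^{n,r}=\frac{2(k+1)}{r}\sum_{i}(-1)^i\frac{\binom{k}{i}\binom{k-i}{i}\binom{n-i-2}{r-1}\binom{n-i-1}{r-i-1}}{\binom{n-i-2}{i}},$$ where the sum runs over all integers $i$ with $0\le i\le k/2$.
   Context: A lattice path from $(0,0)$ to $(r,n-r)$ (with integers $n\ge 1$, $0\le r\le n$) is a sequence of lattice points $v_0=(0,0),v_1,\dots,v_n=(r,n-r)$ with each step $v_i-v_{i-1}\in\{(1,0),(0,1)\}$ (an E step or an N step); its vertex set is $\{v_0,\dots,v_n\}$. For $k\ge 0$, $N_k^{n,r}$ denotes the number of ordered pairs $(P,Q)$ of lattice paths from $(0,0)$ to $(r,n-r)$ such that the intersection of their vertex sets, with the two points $(0,0)$ and $(r,n-r)$ removed, has exactly $k$ elements. Binomial coefficients $\binom{a}{b}$ with $a\ge 0$ are $0$ if $b<0$ or $b>a$. *)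

theory Defs
  imports Complex_Main
begin

definition lattice_path :: "nat \<Rightarrow> nat \<Rightarrow> (int \<times> int) list \<Rightarrow> bool" where
  "lattice_path n r P \<longleftrightarrow>
     length P = n + 1 \<and> P ! 0 = (0, 0) \<and> P ! n = (int r, int n - int r) \<and>
     (\<forall>i<n. (fst (P ! Suc i) - fst (P ! i), snd (P ! Suc i) - snd (P ! i)) \<in> {(1, 0), (0, 1)})"

definition N_paths :: "nat \<Rightarrow> nat \<Rightarrow> nat \<Rightarrow> nat" where
  "N_paths k n r = card {(P, Q). lattice_path n r P \<and> lattice_path n r Q \<and>
      card ((set P \<inter> set Q) - {(0, 0), (int r, int n - int r)}) = k}"

definition binom :: "int \<Rightarrow> int \<Rightarrow> real" where
  "binom a b = (if b < 0 \<or> b > a then 0 else real (nat a choose nat b))"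

end

(*
  Encode a pair of paths as the sequence of its pairs of steps. Cutting at the first common
  interior vertex shows that, with x marking the end point and t the length, the generating
  function T = sum_n sum_r C(n,r)^2 x^r t^n of all pairs and the generating function G of the
  pairs without common interior vertex satisfy T = 1 + G T, and that the pairs with exactly k
  common interior vertices are counted by the coefficients of G^(k+1).

  The three-term recurrence of sum_r C(n,r)^2 x^r becomes the differential equation
  2 Delta T' + Delta' T = 0 with Delta = 1 - 2(1+x)t + (1-x)^2 t^2, hence T^2 Delta = 1 and
  (1 - G)^2 = Delta. So G^(k+3) = 2 G^(k+2) - G^(k+1) + Delta G^(k+1), a recurrence in k for the
  coefficients which the closed form satisfies as well, by a Wilf-Zeilberger certificate. The
  base cases k = 0, 1 follow from the differential equation 2 Delta G' = Delta' (G - 1).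
*)

theory Submission
  imports Defs "HOL-Computational_Algebra.Formal_Power_Series" "HOL-Computational_Algebra.Polynomial"
begin

unbundle fps_syntax

section \<open>Hypergeometric terms and the closed form\<close>

definition fact_int :: "int \<Rightarrow> real" where
  "fact_int x = fact (nat x)"

text \<open>The reciprocal \<open>1/\<Gamma>(x+1)\<close> on the integers: it vanishes at negative integers, so the
  hypergeometric terms below vanish outside their natural range without any case split.\<close>
definition rfact :: "int \<Rightarrow> real" where
  "rfact x = (if x < 0 then 0 else 1 / fact (nat x))"

lemma rfact_neg: "x < 0 \<Longrightarrow> rfact x = 0"
  by (simp add: rfact_def)

lemma rfact_pos: "0 \<le> x \<Longrightarrow> rfact x > 0"
  by (simp add: rfact_def)

lemma rfact_pred: "y = x - 1 \<Longrightarrow> rfact y = of_int x * rfact x"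
proof (cases "x \<le> 0")
  case True
  then show "y = x - 1 \<Longrightarrow> ?thesis"
    by (cases "x = 0") (auto simp: rfact_def)
next
  case False
  then have "nat x = Suc (nat (x - 1))" by simp
  then show "y = x - 1 \<Longrightarrow> ?thesis" using False
    by (auto simp: rfact_def field_simps)
qed

lemma fact_int_succ: "y = x + 1 \<Longrightarrow> 0 \<le> x \<Longrightarrow> fact_int y = of_int y * fact_int x"
proof -
  assume "y = x + 1" "0 \<le> x"
  then have "nat y = Suc (nat x)" by simp
  then show ?thesis using \<open>y = x + 1\<close> \<open>0 \<le> x\<close> by (simp add: fact_int_def)
qed

lemma fact_int_pos: "fact_int x > 0"
  by (simp add: fact_int_def)

lemma fact_int_rfact: "0 \<le> x \<Longrightarrow> fact_int x * rfact x = 1"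
  by (simp add: rfact_def fact_int_def)

lemma binom_eq_fact_int_rfact: "0 \<le> a \<Longrightarrow> binom a b = fact_int a * rfact b * rfact (a - b)"
proof (cases "b < 0 \<or> b > a")
  case True
  then show ?thesis by (auto simp: binom_def rfact_def)
next
  case False
  assume "0 \<le> a"
  then have "nat b \<le> nat a" "nat a - nat b = nat (a - b)" using False by (auto simp: nat_diff_distrib)
  then show ?thesis using False
    by (simp add: binom_def rfact_def fact_int_def binomial_fact)
qed

definition hterm :: "int \<Rightarrow> int \<Rightarrow> int \<Rightarrow> int \<Rightarrow> real" where
  "hterm k n r i = fact_int (n - i - 1) * fact_int (n - 2*i - 2) *
     rfact i * rfact (k - 2*i) * rfact (r - i - 1) * rfact (n - r - i - 1)"

text \<open>Wilf--Zeilberger certificate for the recurrence of \<open>hterm\<close> in \<open>k\<close>, found by Zeilberger's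
  algorithm.\<close>
definition hterm_cert :: "int \<Rightarrow> int \<Rightarrow> int \<Rightarrow> int \<Rightarrow> real" where
  "hterm_cert k n r i = of_int (4*i^2 - (4*n - 6)*i - 2*(n - 1)) * hterm k (n - 2) (r - 1) (i - 1)"

definition hterm_comb :: "int \<Rightarrow> int \<Rightarrow> int \<Rightarrow> int \<Rightarrow> real" where
  "hterm_comb k n r i = of_int ((k+3)*(k+2)) * hterm (k+2) n r i - of_int (2*(k+2)) * hterm (k+1) n r i
       + of_int (2*(n-r)) * hterm k (n-1) r i + of_int (2*r) * hterm k (n-1) (r-1) i
       - of_int ((n-r)*(n-r-1)) * hterm k (n-2) r i + of_int (2*r*(n-r)) * hterm k (n-2) (r-1) i
       - of_int (r*(r-1)) * hterm k (n-2) (r-2) i"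

lemmas of_int_distrib = of_int_mult of_int_add of_int_diff of_int_power of_int_numeral
  of_int_1 of_int_0 of_int_minus

lemma hterm_recurrence_generic:
  fixes k n r i :: int
  assumes "0 \<le> i" "2*i + 4 \<le> n"
  shows "hterm_comb k n r i = - hterm_cert k n r (i+1) - hterm_cert k n r i"
proof -
  have terms:
    "hterm (k+2) n r i = fact_int (n-i-1) * fact_int (n-2*i-2) * rfact i * rfact (k+2-2*i) * rfact (r-i-1) * rfact (n-r-i-1)"
    "hterm (k+1) n r i = fact_int (n-i-1) * fact_int (n-2*i-2) * rfact i * rfact (k+1-2*i) * rfact (r-i-1) * rfact (n-r-i-1)"
    "hterm k (n-1) r i = fact_int (n-i-2) * fact_int (n-2*i-3) * rfact i * rfact (k-2*i) * rfact (r-i-1) * rfact (n-r-i-2)"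
    "hterm k (n-1) (r-1) i = fact_int (n-i-2) * fact_int (n-2*i-3) * rfact i * rfact (k-2*i) * rfact (r-i-2) * rfact (n-r-i-1)"
    "hterm k (n-2) r i = fact_int (n-i-3) * fact_int (n-2*i-4) * rfact i * rfact (k-2*i) * rfact (r-i-1) * rfact (n-r-i-3)"
    "hterm k (n-2) (r-1) i = fact_int (n-i-3) * fact_int (n-2*i-4) * rfact i * rfact (k-2*i) * rfact (r-i-2) * rfact (n-r-i-2)"
    "hterm k (n-2) (r-2) i = fact_int (n-i-3) * fact_int (n-2*i-4) * rfact i * rfact (k-2*i) * rfact (r-i-3) * rfact (n-r-i-1)"
    "hterm_cert k n r (i+1) = of_int (4*(i+1)^2 - (4*n-6)*(i+1) - 2*(n-1)) *
       (fact_int (n-i-3) * fact_int (n-2*i-4) * rfact i * rfact (k-2*i) * rfact (r-i-2) * rfact (n-r-i-2))"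
    "hterm_cert k n r i = of_int (4*i^2 - (4*n-6)*i - 2*(n-1)) *
       (fact_int (n-i-2) * fact_int (n-2*i-2) * rfact (i-1) * rfact (k+2-2*i) * rfact (r-i-1) * rfact (n-r-i-1))"
    by (simp_all add: hterm_def hterm_cert_def algebra_simps)
  have shifts:
    "rfact (k+1-2*i) = of_int (k+2-2*i) * rfact (k+2-2*i)"
    "rfact (k-2*i) = of_int (k+1-2*i) * rfact (k+1-2*i)"
    "rfact (i-1) = of_int i * rfact i"
    "rfact (r-i-2) = of_int (r-i-1) * rfact (r-i-1)"
    "rfact (r-i-3) = of_int (r-i-2) * rfact (r-i-2)"
    "rfact (n-r-i-2) = of_int (n-r-i-1) * rfact (n-r-i-1)"
    "rfact (n-r-i-3) = of_int (n-r-i-2) * rfact (n-r-i-2)"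
    by (rule rfact_pred; simp)+
  have fact_shifts:
    "fact_int (n-i-1) = of_int (n-i-1) * fact_int (n-i-2)"
    "fact_int (n-i-2) = of_int (n-i-2) * fact_int (n-i-3)"
    "fact_int (n-2*i-2) = of_int (n-2*i-2) * fact_int (n-2*i-3)"
    "fact_int (n-2*i-3) = of_int (n-2*i-3) * fact_int (n-2*i-4)"
    by (rule fact_int_succ; use assms in simp)+
  show ?thesis
    unfolding hterm_comb_def terms shifts fact_shifts by (simp only: of_int_distrib) algebra
qed

lemma hterm_recurrence_edge:
  fixes k n r i :: int
  assumes "0 \<le> i" "2*i + 2 \<le> n" "k < 2*i"
  shows "hterm_comb k n r i = - hterm_cert k n r (i+1) - hterm_cert k n r i"
proof -
  have vanish: "hterm k m s i = 0" for m s
    using assms(3) by (simp add: hterm_def rfact_neg)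
  have terms:
    "hterm (k+2) n r i = fact_int (n-i-1) * fact_int (n-2*i-2) * rfact i * rfact (k+2-2*i) * rfact (r-i-1) * rfact (n-r-i-1)"
    "hterm (k+1) n r i = fact_int (n-i-1) * fact_int (n-2*i-2) * rfact i * rfact (k+1-2*i) * rfact (r-i-1) * rfact (n-r-i-1)"
    "hterm_cert k n r i = of_int (4*i^2 - (4*n-6)*i - 2*(n-1)) *
       (fact_int (n-i-2) * fact_int (n-2*i-2) * rfact (i-1) * rfact (k+2-2*i) * rfact (r-i-1) * rfact (n-r-i-1))"
    by (simp_all add: hterm_def hterm_cert_def algebra_simps)
  have cert_vanish: "hterm_cert k n r (i+1) = 0"
    by (simp add: hterm_cert_def vanish)
  have shifts:
    "rfact (k+1-2*i) = of_int (k+2-2*i) * rfact (k+2-2*i)"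
    "rfact (i-1) = of_int i * rfact i"
    "fact_int (n-i-1) = of_int (n-i-1) * fact_int (n-i-2)"
    by (rule rfact_pred, simp)+ (rule fact_int_succ; use assms in simp)
  consider "k + 2 - 2*i < 0" | "k = 2*i - 1 \<or> k = 2*i - 2"
    using assms(3) by arith
  then show ?thesis
  proof cases
    case 1
    then show ?thesis
      unfolding hterm_comb_def vanish cert_vanish terms shifts by (simp add: rfact_neg)
  next
    case 2
    then have "real_of_int ((k + 1 - 2*i) * (k + 2 - 2*i)) = 0" by auto
    then show ?thesis
      unfolding hterm_comb_def vanish cert_vanish terms shifts by (simp only: of_int_distrib) algebra
  qed
qed

lemma hterm_recurrence:
  fixes k n r i :: int
  assumes "0 \<le> i" "k + 4 \<le> n"
  shows "hterm_comb k n r i = - hterm_cert k n r (i+1) - hterm_cert k n r i"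
proof -
  consider "2*i + 4 \<le> n" | "k < 2*i" "2*i + 2 \<le> n" | "k + 2 < 2*i"
    using assms by linarith
  then show ?thesis
  proof cases
    case 1
    then show ?thesis using hterm_recurrence_generic assms by blast
  next
    case 2
    then show ?thesis using hterm_recurrence_edge assms by blast
  next
    case 3
    then show ?thesis
      by (simp add: hterm_comb_def hterm_def hterm_cert_def rfact_neg algebra_simps)
  qed
qed

definition hsum :: "nat \<Rightarrow> int \<Rightarrow> int \<Rightarrow> real" where
  "hsum k n r = (\<Sum>i = 0..k div 2. (-1)^i * hterm (int k) n r (int i))"

text \<open>The right-hand side of the theorem in terms of factorials, see \<open>N_closed_eq_binom_sum\<close>.\<close>
definition N_closed :: "nat \<Rightarrow> int \<Rightarrow> int \<Rightarrow> real" where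
  "N_closed k n r = 2 * fact (k + 1) * rfact r * rfact (n - r) * hsum k n r"

lemma hsum_extend:
  assumes "k div 2 \<le> M"
  shows "hsum k n r = (\<Sum>i = 0..M. (-1)^i * hterm (int k) n r (int i))"
  unfolding hsum_def using assms
  by (intro sum.mono_neutral_left) (auto simp: hterm_def rfact_neg)

lemma hsum_recurrence:
  fixes n r :: int and k :: nat
  assumes "int k + 4 \<le> n"
  shows "of_int ((int k+3)*(int k+2)) * hsum (k+2) n r - of_int (2*(int k+2)) * hsum (k+1) n r
     + of_int (2*(n-r)) * hsum k (n-1) r + of_int (2*r) * hsum k (n-1) (r-1)
     - of_int ((n-r)*(n-r-1)) * hsum k (n-2) r + of_int (2*r*(n-r)) * hsum k (n-2) (r-1)
     - of_int (r*(r-1)) * hsum k (n-2) (r-2) = 0"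
proof -
  define M where "M = (k + 2) div 2"
  define c where "c i = (-1)^i * hterm_cert (int k) n r (int i)" for i
  have M: "(k+2) div 2 \<le> M" "(k+1) div 2 \<le> M" "k div 2 \<le> M"
    by (auto simp: M_def)
  have comb: "hterm_comb (int k) n r (int i) = - hterm_cert (int k) n r (int (Suc i)) - hterm_cert (int k) n r (int i)" for i
    using hterm_recurrence[of "int i" "int k" n r] assms by (simp add: add.commute)
  have "(\<Sum>i = 0..M. (-1)^i * hterm_comb (int k) n r (int i)) = (\<Sum>i = 0..M. c (Suc i) - c i)"
    unfolding comb c_def by (simp add: algebra_simps)
  also have "\<dots> = c (Suc M) - c 0"
    by (rule sum_Suc_diff) simp
  also have "\<dots> = 0"
    by (simp add: c_def M_def hterm_cert_def hterm_def rfact_neg)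
  finally show ?thesis
    unfolding hsum_extend[OF M(1)] hsum_extend[OF M(2)] hsum_extend[OF M(3)] hterm_comb_def
    by (simp add: sum_distrib_left sum.distrib sum_subtractf algebra_simps)
qed

lemma N_closed_recurrence:
  fixes n r :: int and k :: nat
  assumes "int k + 4 \<le> n"
  shows "N_closed (k+2) n r = 2 * N_closed (k+1) n r - 2 * N_closed k (n-1) r - 2 * N_closed k (n-1) (r-1)
     + N_closed k (n-2) r - 2 * N_closed k (n-2) (r-1) + N_closed k (n-2) (r-2)"
proof -
  have facts: "fact (k + 2 + 1) = (real k + 3) * (real k + 2) * fact (k + 1)"
    "fact (k + 1 + 1) = (real k + 2) * fact (k + 1)"
    by (simp_all add: algebra_simps)
  have args: "n - 1 - (r - 1) = n - r" "n - 2 - (r - 2) = n - r" by simp_all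
  have shifts:
    "rfact (r - 1) = of_int r * rfact r"
    "rfact (r - 2) = of_int (r - 1) * rfact (r - 1)"
    "rfact (n - 1 - r) = of_int (n - r) * rfact (n - r)"
    "rfact (n - 2 - r) = of_int (n - 1 - r) * rfact (n - 1 - r)"
    "rfact (n - 2 - (r - 1)) = of_int (n - r) * rfact (n - r)"
    by (rule rfact_pred; simp)+
  show ?thesis
    using hsum_recurrence[OF assms, of r] unfolding N_closed_def facts args shifts
    by (simp only: of_int_distrib of_int_of_nat_eq) algebra
qed

lemma N_closed_one: "N_closed 1 n r = 2 * N_closed 0 n r"
  by (simp add: N_closed_def hsum_def hterm_def rfact_def)

lemma N_closed_zero:
  "N_closed 0 n r = 2 * fact_int (n-1) * fact_int (n-2) * rfact r * rfact (r-1) * rfact (n-r) * rfact (n-r-1)"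
  by (simp add: N_closed_def hsum_def hterm_def rfact_def)

lemma N_closed_zero_recurrence:
  fixes n r :: int
  assumes "3 \<le> n"
  shows "of_int n * N_closed 0 n r = of_int (2*n-3) * (N_closed 0 (n-1) r + N_closed 0 (n-1) (r-1))
     - of_int (n-3) * (N_closed 0 (n-2) r - 2 * N_closed 0 (n-2) (r-1) + N_closed 0 (n-2) (r-2))"
proof (cases "n = 3")
  case True
  consider "r \<le> 0" | "r = 1" | "r = 2" | "3 \<le> r" by linarith
  then show ?thesis
    using True by cases (simp_all add: N_closed_zero rfact_def fact_int_def)
next
  case False
  with assms have n: "4 \<le> n" by simp
  have terms:
    "N_closed 0 (n-1) r = 2 * fact_int (n-2) * fact_int (n-3) * rfact r * rfact (r-1) * rfact (n-r-1) * rfact (n-r-2)"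
    "N_closed 0 (n-1) (r-1) = 2 * fact_int (n-2) * fact_int (n-3) * rfact (r-1) * rfact (r-2) * rfact (n-r) * rfact (n-r-1)"
    "N_closed 0 (n-2) r = 2 * fact_int (n-3) * fact_int (n-4) * rfact r * rfact (r-1) * rfact (n-r-2) * rfact (n-r-3)"
    "N_closed 0 (n-2) (r-1) = 2 * fact_int (n-3) * fact_int (n-4) * rfact (r-1) * rfact (r-2) * rfact (n-r-1) * rfact (n-r-2)"
    "N_closed 0 (n-2) (r-2) = 2 * fact_int (n-3) * fact_int (n-4) * rfact (r-2) * rfact (r-3) * rfact (n-r) * rfact (n-r-1)"
    by (simp_all add: N_closed_zero algebra_simps)
  have shifts:
    "rfact (r-1) = of_int r * rfact r"
    "rfact (r-2) = of_int (r-1) * rfact (r-1)"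
    "rfact (r-3) = of_int (r-2) * rfact (r-2)"
    "rfact (n-r-1) = of_int (n-r) * rfact (n-r)"
    "rfact (n-r-2) = of_int (n-r-1) * rfact (n-r-1)"
    "rfact (n-r-3) = of_int (n-r-2) * rfact (n-r-2)"
    by (rule rfact_pred; simp)+
  have fact_shifts:
    "fact_int (n-1) = of_int (n-1) * fact_int (n-2)"
    "fact_int (n-2) = of_int (n-2) * fact_int (n-3)"
    "fact_int (n-3) = of_int (n-3) * fact_int (n-4)"
    by (rule fact_int_succ; use n in simp)+
  show ?thesis
    unfolding N_closed_zero[of n r] terms shifts fact_shifts by (simp only: of_int_distrib) algebra
qed

lemma binom_square_recurrence:
  fixes n r :: int
  assumes "1 \<le> n"
  shows "of_int n * (binom n r)^2 = of_int (2*n-1) * ((binom (n-1) r)^2 + (binom (n-1) (r-1))^2)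
     - of_int (n-1) * ((binom (n-2) r)^2 - 2 * (binom (n-2) (r-1))^2 + (binom (n-2) (r-2))^2)"
proof (cases "n = 1")
  case True
  then show ?thesis by (cases "r = 0 \<or> r = 1") (auto simp: binom_def)
next
  case False
  with assms have n: "2 \<le> n" by simp
  have terms:
    "binom n r = fact_int n * rfact r * rfact (n-r)"
    "binom (n-1) r = fact_int (n-1) * rfact r * rfact (n-r-1)"
    "binom (n-1) (r-1) = fact_int (n-1) * rfact (r-1) * rfact (n-r)"
    "binom (n-2) r = fact_int (n-2) * rfact r * rfact (n-r-2)"
    "binom (n-2) (r-1) = fact_int (n-2) * rfact (r-1) * rfact (n-r-1)"
    "binom (n-2) (r-2) = fact_int (n-2) * rfact (r-2) * rfact (n-r)"
    using n by (simp_all add: binom_eq_fact_int_rfact algebra_simps)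
  have shifts:
    "rfact (r-1) = of_int r * rfact r"
    "rfact (r-2) = of_int (r-1) * rfact (r-1)"
    "rfact (n-r-1) = of_int (n-r) * rfact (n-r)"
    "rfact (n-r-2) = of_int (n-r-1) * rfact (n-r-1)"
    by (rule rfact_pred; simp)+
  have fact_shifts:
    "fact_int n = of_int n * fact_int (n-1)"
    "fact_int (n-1) = of_int (n-1) * fact_int (n-2)"
    by (rule fact_int_succ; use n in simp)+
  show ?thesis
    unfolding terms shifts fact_shifts by (simp only: of_int_distrib) algebra
qed

section \<open>Pairs of paths as step sequences\<close>

text \<open>A pair of lattice paths with \<open>n\<close> steps each is encoded as the list of its \<open>n\<close> pairs of
  steps, \<open>True\<close> standing for an E step. After \<open>t\<close> steps both paths lie on the antidiagonal
  \<open>x + y = t\<close>, so they meet there iff they have made equally many E steps.\<close>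
type_synonym step_pair = "bool \<times> bool"

definition east1 :: "step_pair list \<Rightarrow> nat" where
  "east1 xs = length (filter fst xs)"

definition east2 :: "step_pair list \<Rightarrow> nat" where
  "east2 xs = length (filter snd xs)"

definition meets_at :: "step_pair list \<Rightarrow> nat \<Rightarrow> bool" where
  "meets_at xs t \<longleftrightarrow> east1 (take t xs) = east2 (take t xs)"

definition meetings :: "step_pair list \<Rightarrow> nat" where
  "meetings xs = card {t \<in> {1..<length xs}. meets_at xs t}"

definition coterminal :: "nat \<Rightarrow> step_pair list set" where
  "coterminal n = {xs. length xs = n \<and> east1 xs = east2 xs}"

definition first_return :: "nat \<Rightarrow> step_pair list set" where
  "first_return n = {xs \<in> coterminal n. meetings xs = 0}"

lemma east1_append [simp]: "east1 (xs @ ys) = east1 xs + east1 ys"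
  by (simp add: east1_def)

lemma east2_append [simp]: "east2 (xs @ ys) = east2 xs + east2 ys"
  by (simp add: east2_def)

lemma finite_lists_of_length: "finite {xs :: 'a::finite list. length xs = n}"
  using finite_lists_length_eq[OF finite_UNIV, of n] by simp

lemma finite_coterminal: "finite (coterminal n)"
  by (rule finite_subset[OF _ finite_lists_of_length[of n]]) (auto simp: coterminal_def)

lemma finite_first_return: "finite (first_return n)"
  using finite_coterminal by (simp add: first_return_def)

lemma meets_at_append:
  assumes "east1 p = east2 p"
  shows "meets_at (p @ q) t \<longleftrightarrow> (if t \<le> length p then meets_at p t else meets_at q (t - length p))"
  using assms by (auto simp: meets_at_def east1_def east2_def)

lemma meets_at_length: "east1 xs = east2 xs \<Longrightarrow> meets_at xs (length xs)"
  by (simp add: meets_at_def)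

lemma first_return_no_meeting:
  assumes "p \<in> first_return L" "1 \<le> t" "t < L"
  shows "\<not> meets_at p t"
proof -
  have "card {t \<in> {1..<L}. meets_at p t} = 0"
    using assms(1) by (simp add: first_return_def coterminal_def meetings_def)
  then show ?thesis using assms(2,3) by simp
qed

lemma meetings_append:
  assumes p: "p \<in> first_return L" and q: "q \<in> coterminal m" and "1 \<le> L"
  shows "meetings (p @ q) = (if m = 0 then 0 else Suc (meetings q))"
proof -
  have lp: "length p = L" and cp: "east1 p = east2 p" and lq: "length q = m"
    using p q by (auto simp: first_return_def coterminal_def)
  have split: "{t \<in> {1..<L+m}. meets_at (p @ q) t}
      = (if m = 0 then {} else {L}) \<union> (\<lambda>t. t + L) ` {t \<in> {1..<m}. meets_at q t}"
  proof (intro set_eqI iffI)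
    fix t
    assume "t \<in> {t \<in> {1..<L+m}. meets_at (p @ q) t}"
    then show "t \<in> (if m = 0 then {} else {L}) \<union> (\<lambda>t. t + L) ` {t \<in> {1..<m}. meets_at q t}"
      using first_return_no_meeting[OF p, of t]
      by (cases t L rule: linorder_cases)
        (auto simp: meets_at_append[OF cp] lp intro!: image_eqI[of t _ "t - L"])
  next
    fix t
    assume "t \<in> (if m = 0 then {} else {L}) \<union> (\<lambda>t. t + L) ` {t \<in> {1..<m}. meets_at q t}"
    then show "t \<in> {t \<in> {1..<L+m}. meets_at (p @ q) t}"
      using meets_at_length[OF cp] \<open>1 \<le> L\<close>
      by (auto simp: meets_at_append[OF cp] lp split: if_splits)
  qed
  have "meetings (p @ q) = card (if m = 0 then {} else {L}) + meetings q"
    unfolding meetings_def length_append lp lq split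
    by (subst card_Un_disjoint) (auto simp: card_image inj_on_def)
  moreover have "m = 0 \<Longrightarrow> meetings q = 0"
    using lq by (simp add: meetings_def)
  ultimately show ?thesis by simp
qed

definition first_meeting :: "step_pair list \<Rightarrow> nat" where
  "first_meeting xs = (LEAST t. 1 \<le> t \<and> meets_at xs t)"

lemma first_meeting_append:
  assumes p: "p \<in> first_return L" and "1 \<le> L"
  shows "first_meeting (p @ q) = L"
  unfolding first_meeting_def
proof (rule Least_equality)
  have "length p = L" "east1 p = east2 p"
    using p by (auto simp: first_return_def coterminal_def)
  then show "1 \<le> L \<and> meets_at (p @ q) L"
    using \<open>1 \<le> L\<close> meets_at_length[of p] by (simp add: meets_at_append)
  show "L \<le> t" if "1 \<le> t \<and> meets_at (p @ q) t" for t
    using that first_return_no_meeting[OF p, of t] \<open>length p = L\<close> \<open>east1 p = east2 p\<close>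
    by (force simp: meets_at_append)
qed

lemma first_meeting_split:
  assumes xs: "xs \<in> coterminal n" and "1 \<le> n"
  defines "L \<equiv> first_meeting xs"
  shows "L \<in> {1..n}" "take L xs \<in> first_return L" "drop L xs \<in> coterminal (n - L)"
proof -
  have lx: "length xs = n" and cx: "east1 xs = east2 xs"
    using xs by (auto simp: coterminal_def)
  have ex: "1 \<le> n \<and> meets_at xs n"
    using \<open>1 \<le> n\<close> meets_at_length[OF cx] lx by simp
  have L: "1 \<le> L \<and> meets_at xs L"
    unfolding L_def first_meeting_def by (rule LeastI[of _ n]) (rule ex)
  have "L \<le> n"
    unfolding L_def first_meeting_def by (rule Least_le) (rule ex)
  then show "L \<in> {1..n}" using L by simp
  have "\<not> meets_at xs t" if "1 \<le> t" "t < L" for t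
    using that not_less_Least unfolding L_def first_meeting_def by blast
  then have "meetings (take L xs) = 0"
    using \<open>L \<le> n\<close> lx by (auto simp: meetings_def meets_at_def min_def)
  moreover have cp: "east1 (take L xs) = east2 (take L xs)"
    using L by (simp add: meets_at_def)
  ultimately show "take L xs \<in> first_return L"
    using \<open>L \<le> n\<close> lx by (simp add: first_return_def coterminal_def)
  have "east1 (take L xs) + east1 (drop L xs) = east2 (take L xs) + east2 (drop L xs)"
    using cx by (metis append_take_drop_id east1_append east2_append)
  then show "drop L xs \<in> coterminal (n - L)"
    using cp lx by (simp add: coterminal_def)
qed

lemma sum_coterminal_first_return:
  fixes \<phi> :: "step_pair list \<Rightarrow> 'a::comm_monoid_add"
  assumes "1 \<le> n"
  shows "(\<Sum>xs\<in>coterminal n. \<phi> xs) = (\<Sum>L=1..n. \<Sum>p\<in>first_return L. \<Sum>q\<in>coterminal (n - L). \<phi> (p @ q))"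
proof -
  have "(\<Sum>xs\<in>coterminal n. \<phi> xs)
      = (\<Sum>(L, p, q)\<in>(SIGMA L:{1..n}. first_return L \<times> coterminal (n - L)). \<phi> (p @ q))"
  proof (rule sum.reindex_bij_witness[where i = "\<lambda>(L, p, q). p @ q"
        and j = "\<lambda>xs. (first_meeting xs, take (first_meeting xs) xs, drop (first_meeting xs) xs)"])
    fix b assume "b \<in> (SIGMA L:{1..n}. first_return L \<times> coterminal (n - L))"
    then obtain L p q where "b = (L, p, q)" "L \<in> {1..n}" "p \<in> first_return L" "q \<in> coterminal (n - L)"
      by auto
    moreover from this have "length p = L" "length q = n - L" "east1 p = east2 p" "east1 q = east2 q"
      by (auto simp: first_return_def coterminal_def)
    ultimately show "(\<lambda>xs. (first_meeting xs, take (first_meeting xs) xs, drop (first_meeting xs) xs))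
        ((\<lambda>(L, p, q). p @ q) b) = b" "(\<lambda>(L, p, q). p @ q) b \<in> coterminal n"
      by (auto simp: first_meeting_append coterminal_def)
  qed (use first_meeting_split[OF _ assms] in auto)
  also have "\<dots> = (\<Sum>L=1..n. \<Sum>(p, q)\<in>first_return L \<times> coterminal (n - L). \<phi> (p @ q))"
    by (rule sum.Sigma[symmetric]) (auto simp: finite_first_return finite_coterminal)
  also have "\<dots> = (\<Sum>L=1..n. \<Sum>p\<in>first_return L. \<Sum>q\<in>coterminal (n - L). \<phi> (p @ q))"
    by (simp add: sum.cartesian_product)
  finally show ?thesis .
qed

section \<open>Generating functions\<close>

text \<open>In the generating functions below the polynomial variable \<open>x\<close> counts the E steps of the
  first path, so it records the common end point, and the power series variable \<open>t\<close> counts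
  the length.\<close>
definition meeting_poly :: "nat \<Rightarrow> nat \<Rightarrow> real poly" where
  "meeting_poly k n = (\<Sum>xs\<in>{xs \<in> coterminal n. meetings xs = k}. monom 1 (east1 xs))"

definition coterminal_poly :: "nat \<Rightarrow> real poly" where
  "coterminal_poly n = (\<Sum>xs\<in>coterminal n. monom 1 (east1 xs))"

definition return_gf :: "real poly fps" where
  "return_gf = Abs_fps (\<lambda>n. if n = 0 then 0 else meeting_poly 0 n)"

definition coterminal_gf :: "real poly fps" where
  "coterminal_gf = Abs_fps coterminal_poly"

lemma return_gf_nth_0 [simp]: "return_gf $ 0 = 0"
  by (simp add: return_gf_def)

lemma meeting_poly_zero: "meeting_poly 0 n = (\<Sum>p\<in>first_return n. monom 1 (east1 p))"
  by (simp add: meeting_poly_def first_return_def)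

lemma meeting_poly_Suc:
  assumes "1 \<le> n"
  shows "meeting_poly (Suc k) n = (\<Sum>L=1..n. if L < n then meeting_poly 0 L * meeting_poly k (n - L) else 0)"
proof -
  have as_sum: "meeting_poly k m = (\<Sum>xs\<in>coterminal m. if meetings xs = k then monom 1 (east1 xs) else 0)" for k m
    unfolding meeting_poly_def by (simp add: sum.inter_filter[symmetric] finite_coterminal)
  have "(\<Sum>p\<in>first_return L. \<Sum>q\<in>coterminal (n - L).
           if meetings (p @ q) = Suc k then monom 1 (east1 (p @ q)) else 0)
      = (if L < n then meeting_poly 0 L * meeting_poly k (n - L) else 0)" if "L \<in> {1..n}" for L
  proof -
    have "(if meetings (p @ q) = Suc k then monom 1 (east1 (p @ q)) else 0 :: real poly)
        = (if L < n then monom 1 (east1 p) * (if meetings q = k then monom 1 (east1 q) else 0) else 0)"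
      if "p \<in> first_return L" "q \<in> coterminal (n - L)" for p q
      using meetings_append[OF that] \<open>L \<in> {1..n}\<close> by (auto simp: mult_monom)
    then show ?thesis
      by (simp add: meeting_poly_zero as_sum[of k] sum_product)
  qed
  then show ?thesis
    unfolding as_sum[of "Suc k"] sum_coterminal_first_return[OF assms] by (rule sum.cong[OF refl])
qed

lemma coterminal_poly_first_return:
  assumes "1 \<le> n"
  shows "coterminal_poly n = (\<Sum>L=1..n. meeting_poly 0 L * coterminal_poly (n - L))"
  unfolding coterminal_poly_def sum_coterminal_first_return[OF assms]
  by (simp add: meeting_poly_zero mult_monom sum_product)

lemma coterminal_poly_0: "coterminal_poly 0 = 1"
proof -
  have "coterminal 0 = {[]}"
    by (auto simp: coterminal_def east1_def east2_def)
  then show ?thesis by (simp add: coterminal_poly_def east1_def)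
qed

lemma coterminal_gf_eq: "coterminal_gf = 1 + return_gf * coterminal_gf"
proof (rule fps_ext)
  fix n
  show "coterminal_gf $ n = (1 + return_gf * coterminal_gf) $ n"
  proof (cases "n = 0")
    case True
    then show ?thesis by (simp add: coterminal_gf_def return_gf_def coterminal_poly_0)
  next
    case False
    have "(return_gf * coterminal_gf) $ n = (\<Sum>i=0..n. return_gf $ i * coterminal_gf $ (n - i))"
      by (rule fps_mult_nth)
    also have "\<dots> = (\<Sum>i=1..n. meeting_poly 0 i * coterminal_poly (n - i))"
      by (rule sum.mono_neutral_cong_right) (auto simp: return_gf_def coterminal_gf_def)
    also have "\<dots> = coterminal_poly n"
      using coterminal_poly_first_return[of n] False by simp
    finally show ?thesis using False by (simp add: coterminal_gf_def)
  qed
qed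

lemma meeting_poly_eq_power: "1 \<le> n \<Longrightarrow> meeting_poly k n = (return_gf ^ Suc k) $ n"
proof (induction k arbitrary: n)
  case 0
  then show ?case by (simp add: return_gf_def)
next
  case (Suc k)
  have "(return_gf ^ Suc (Suc k)) $ n = (\<Sum>i=0..n. return_gf $ i * (return_gf ^ Suc k) $ (n - i))"
    by (simp add: fps_mult_nth)
  also have "\<dots> = (\<Sum>i=1..n. if i < n then meeting_poly 0 i * meeting_poly k (n - i) else 0)"
    by (rule sum.mono_neutral_cong_right)
      (auto simp: return_gf_def Suc.IH fps_mult_nth_0 not_less)
  also have "\<dots> = meeting_poly (Suc k) n"
    using meeting_poly_Suc[OF Suc.prems] by simp
  finally show ?case by simp
qed

lemma coeff_sum_monom:
  assumes "finite A"
  shows "coeff (\<Sum>x\<in>A. monom (1::'a::comm_semiring_1) (f x)) r = of_nat (card {x\<in>A. f x = r})"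
proof -
  have "coeff (\<Sum>x\<in>A. monom (1::'a) (f x)) r = (\<Sum>x\<in>A. if f x = r then 1 else 0)"
    by (simp add: coeff_sum coeff_monom)
  also have "\<dots> = of_nat (card {x\<in>A. f x = r})"
    using assms by (simp add: sum.If_cases Int_def)
  finally show ?thesis .
qed

lemma coeff_meeting_poly: "coeff (meeting_poly k n) r = real (card {xs \<in> coterminal n. meetings xs = k \<and> east1 xs = r})"
  unfolding meeting_poly_def by (subst coeff_sum_monom) (auto simp: finite_coterminal intro: arg_cong[where f = card])

definition east_count :: "bool list \<Rightarrow> nat" where
  "east_count s = length (filter (\<lambda>b. b) s)"

lemma card_bool_lists_count: "card {s :: bool list. length s = n \<and> east_count s = r} = n choose r"
proof (induction n arbitrary: r)
  case 0
  have "{s :: bool list. length s = 0 \<and> east_count s = r} = (if r = 0 then {[]} else {})"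
    by (auto simp: east_count_def)
  then show ?case by simp
next
  case (Suc n)
  let ?S = "\<lambda>n r. {s :: bool list. length s = n \<and> east_count s = r}"
  have fin: "finite (?S n r)" for r
    by (rule finite_subset[OF _ finite_lists_of_length[of n]]) auto
  have split: "?S (Suc n) r = (if r = 0 then {} else Cons True ` ?S n (r - 1)) \<union> Cons False ` ?S n r"
    by (auto simp: length_Suc_conv east_count_def split: if_splits)
  have "card (?S (Suc n) r) = (if r = 0 then 0 else n choose (r - 1)) + (n choose r)"
    unfolding split by (subst card_Un_disjoint) (auto simp: fin card_image Suc.IH)
  then show ?case by (cases r) simp_all
qed

lemma east1_map: "east1 xs = east_count (map fst xs)"
  by (simp add: east1_def east_count_def comp_def)

lemma east2_map: "east2 xs = east_count (map snd xs)"
  by (simp add: east2_def east_count_def comp_def)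

lemma east1_zip: "length s1 = length s2 \<Longrightarrow> east1 (zip s1 s2) = east_count s1"
  by (simp only: east1_map map_fst_zip)

lemma east2_zip: "length s1 = length s2 \<Longrightarrow> east2 (zip s1 s2) = east_count s2"
  by (simp only: east2_map map_snd_zip)

lemma card_coterminal_east1: "card {xs \<in> coterminal n. east1 xs = r} = (n choose r)^2"
proof -
  let ?B = "{s :: bool list. length s = n \<and> east_count s = r}"
  have "bij_betw (\<lambda>xs. (map fst xs, map snd xs)) {xs \<in> coterminal n. east1 xs = r} (?B \<times> ?B)"
  proof (rule bij_betw_byWitness[where f' = "\<lambda>(s1, s2). zip s1 s2"])
    show "(\<lambda>(s1, s2). zip s1 s2) ` (?B \<times> ?B) \<subseteq> {xs \<in> coterminal n. east1 xs = r}"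
      by (auto simp: coterminal_def east1_zip east2_zip)
    show "(\<lambda>xs. (map fst xs, map snd xs)) ` {xs \<in> coterminal n. east1 xs = r} \<subseteq> ?B \<times> ?B"
      by (auto simp: coterminal_def east1_map east2_map)
  qed (auto simp: zip_map_fst_snd)
  then show ?thesis
    by (simp add: bij_betw_same_card card_cartesian_product card_bool_lists_count power2_eq_square)
qed

lemma coeff_coterminal_poly: "coeff (coterminal_poly n) r = real (n choose r) ^ 2"
  unfolding coterminal_poly_def
  by (subst coeff_sum_monom) (simp_all add: finite_coterminal card_coterminal_east1)

section \<open>The first-return series\<close>

definition polyX :: "real poly" where
  "polyX = [:0, 1:]"

definition coeff_int :: "real poly \<Rightarrow> int \<Rightarrow> real" where
  "coeff_int p j = (if j < 0 then 0 else coeff p (nat j))"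

lemma poly_eqI_coeff_int: "(\<And>j. 0 \<le> j \<Longrightarrow> coeff_int p j = coeff_int q j) \<Longrightarrow> p = q"
  by (rule poly_eqI) (metis coeff_int_def nat_int of_nat_0_le_iff not_less)

lemma coeff_int_add [simp]: "coeff_int (p + q) j = coeff_int p j + coeff_int q j"
  by (simp add: coeff_int_def)

lemma coeff_int_diff [simp]: "coeff_int (p - q) j = coeff_int p j - coeff_int q j"
  by (simp add: coeff_int_def)

lemma coeff_int_of_nat_mult [simp]: "coeff_int (of_nat c * p) j = of_nat c * coeff_int p j"
  by (simp add: coeff_int_def of_nat_poly)

lemma coeff_int_numeral_mult [simp]: "coeff_int (numeral c * p) j = numeral c * coeff_int p j"
  using coeff_int_of_nat_mult[of "numeral c" p j] by simp

lemma coeff_int_polyX_mult [simp]: "coeff_int (polyX * p) j = coeff_int p (j - 1)"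
  by (auto simp: coeff_int_def polyX_def coeff_pCons nat_diff_distrib' split: nat.split)

lemma coeff_int_polyX: "coeff_int polyX j = (if j = 1 then 1 else 0)"
  using coeff_int_polyX_mult[of 1 j] by (simp add: coeff_int_def)

lemma coeff_int_one_plus_polyX_mult: "coeff_int ((1 + polyX) * p) j = coeff_int p j + coeff_int p (j - 1)"
  by (simp add: distrib_right)

lemma coeff_int_one_minus_polyX_sq_mult:
  "coeff_int ((1 - polyX)^2 * p) j = coeff_int p j - 2 * coeff_int p (j - 1) + coeff_int p (j - 2)"
proof -
  have "(1 - polyX)^2 * p = p - 2 * (polyX * p) + polyX * (polyX * p)"
    by (simp add: power2_eq_square algebra_simps)
  then show ?thesis by simp
qed

lemma coeff_int_coterminal_poly: "coeff_int (coterminal_poly m) j = (binom (int m) j)^2"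
  by (auto simp: coeff_int_def binom_def coeff_coterminal_poly)

lemma coterminal_poly_recurrence:
  "of_nat (n+1) * coterminal_poly (n+1)
     = (1 + polyX) * (of_nat (2*n+1) * coterminal_poly n) - (1 - polyX)^2 * (of_nat n * coterminal_poly (n-1))"
proof (rule poly_eqI_coeff_int)
  fix j :: int
  have rec: "of_int (int n + 1) * (binom (int n + 1) j)^2
      = of_int (2*(int n+1)-1) * ((binom (int n) j)^2 + (binom (int n) (j-1))^2)
        - of_int (int n) * ((binom (int n - 1) j)^2 - 2 * (binom (int n - 1) (j-1))^2 + (binom (int n - 1) (j-2))^2)"
    using binom_square_recurrence[of "int n + 1" j] by simp
  show "coeff_int (of_nat (n+1) * coterminal_poly (n+1)) j
      = coeff_int ((1 + polyX) * (of_nat (2*n+1) * coterminal_poly n) - (1 - polyX)^2 * (of_nat n * coterminal_poly (n-1))) j"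
    unfolding coeff_int_diff coeff_int_one_plus_polyX_mult coeff_int_one_minus_polyX_sq_mult
      coeff_int_of_nat_mult coeff_int_coterminal_poly
    using rec by (cases n) (simp_all add: algebra_simps)
qed

definition Delta :: "real poly fps" where
  "Delta = 1 - fps_const (2 * (1 + polyX)) * fps_X + fps_const ((1 - polyX)^2) * fps_X^2"

lemma Delta_nth:
  "Delta $ n = (if n = 0 then 1 else if n = 1 then - 2 * (1 + polyX) else if n = 2 then (1 - polyX)^2 else 0)"
  unfolding Delta_def by (simp add: fps_X_power_nth)

lemma Delta_mult_nth:
  "(Delta * f) $ n = f $ n - 2 * (1 + polyX) * (if n = 0 then 0 else f $ (n - 1))
     + (1 - polyX)^2 * (if n < 2 then 0 else f $ (n - 2))"
proof -
  have "Delta * f = f - fps_const (2 * (1 + polyX)) * (fps_X * f) + fps_const ((1 - polyX)^2) * (fps_X^2 * f)"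
    unfolding Delta_def by (simp only: ring_distribs mult.assoc mult_1)
  then show ?thesis by (simp add: fps_X_mult_nth fps_X_power_mult_nth)
qed

lemma fps_deriv_Delta: "fps_deriv Delta = fps_const (- 2 * (1 + polyX)) + fps_const (2 * (1 - polyX)^2) * fps_X"
  by (rule fps_ext) (auto simp: Delta_nth fps_X_nth)

lemma fps_deriv_Delta_mult_nth:
  "(fps_deriv Delta * f) $ n = - 2 * (1 + polyX) * f $ n + (if n = 0 then 0 else 2 * (1 - polyX)^2 * f $ (n - 1))"
  by (simp add: fps_deriv_Delta distrib_right mult.assoc fps_X_mult_nth)

lemma coterminal_gf_ode: "2 * Delta * fps_deriv coterminal_gf + fps_deriv Delta * coterminal_gf = 0"
proof (rule fps_ext)
  fix n
  let ?T = coterminal_poly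
  have lhs: "(2 * Delta * fps_deriv coterminal_gf + fps_deriv Delta * coterminal_gf) $ n
      = 2 * (Delta * fps_deriv coterminal_gf) $ n + (fps_deriv Delta * coterminal_gf) $ n"
    by (simp only: mult_2 distrib_right fps_add_nth)
  show "(2 * Delta * fps_deriv coterminal_gf + fps_deriv Delta * coterminal_gf) $ n = 0 $ n"
  proof (cases n)
    case 0
    then show ?thesis
      using coterminal_poly_recurrence[of 0]
      unfolding lhs Delta_mult_nth fps_deriv_Delta_mult_nth by (simp add: coterminal_gf_def algebra_simps)
  next
    case (Suc m)
    have "(2 * Delta * fps_deriv coterminal_gf + fps_deriv Delta * coterminal_gf) $ n
      = 2 * (of_nat (m+2) * ?T (m+2) - 2 * (1 + polyX) * (of_nat (m+1) * ?T (m+1))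
          + (1 - polyX)^2 * (of_nat m * ?T m))
        - 2 * (1 + polyX) * ?T (m+1) + 2 * (1 - polyX)^2 * ?T m"
      unfolding lhs Delta_mult_nth fps_deriv_Delta_mult_nth using Suc
      by (cases m) (simp_all add: coterminal_gf_def algebra_simps)
    also have "\<dots> = 0"
      using coterminal_poly_recurrence[of "m+1"] by (simp add: algebra_simps)
    finally show ?thesis by simp
  qed
qed

lemma coterminal_gf_sq_Delta: "coterminal_gf^2 * Delta = 1"
proof -
  have "fps_deriv (coterminal_gf^2 * Delta)
      = coterminal_gf * (2 * Delta * fps_deriv coterminal_gf + fps_deriv Delta * coterminal_gf)"
    by (simp add: fps_deriv_power power2_eq_square algebra_simps)
  also have "\<dots> = 0" by (simp add: coterminal_gf_ode)
  finally have "coterminal_gf^2 * Delta = fps_const ((coterminal_gf^2 * Delta) $ 0)"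
    by (simp only: fps_deriv_eq_0_iff)
  also have "(coterminal_gf^2 * Delta) $ 0 = 1"
    by (simp add: coterminal_gf_def coterminal_poly_0 Delta_nth power2_eq_square)
  finally show ?thesis by simp
qed

lemma one_minus_return_gf_sq: "(1 - return_gf)^2 = Delta"
proof -
  have inverse: "coterminal_gf * (1 - return_gf) = 1"
    using coterminal_gf_eq by (simp add: algebra_simps)
  have "(1 - return_gf)^2 = (1 - return_gf)^2 * (coterminal_gf^2 * Delta)"
    by (simp add: coterminal_gf_sq_Delta)
  also have "\<dots> = (coterminal_gf * (1 - return_gf))^2 * Delta"
    by (simp only: power_mult_distrib mult_ac)
  finally show ?thesis by (simp add: inverse)
qed

lemma return_gf_ode: "2 * Delta * fps_deriv return_gf = fps_deriv Delta * (return_gf - 1)"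
proof -
  have "fps_deriv Delta = - 2 * (1 - return_gf) * fps_deriv return_gf"
    by (simp flip: one_minus_return_gf_sq numeral_fps_const add: fps_deriv_power algebra_simps)
  then show ?thesis
    by (simp flip: one_minus_return_gf_sq add: power2_eq_square algebra_simps)
qed

lemma return_gf_ode_nth: "2 * (Delta * fps_deriv return_gf) $ m = (fps_deriv Delta * (return_gf - 1)) $ m"
  using return_gf_ode by (metis fps_add_nth mult_2 distrib_right)

lemma return_gf_nth_1: "return_gf $ 1 = 1 + polyX"
  using return_gf_ode_nth[of 0] unfolding Delta_mult_nth fps_deriv_Delta_mult_nth by simp

lemma return_gf_nth_2: "return_gf $ 2 = 2 * polyX"
proof -
  have "4 * return_gf $ 2 = 2 * (1 + polyX) * (1 + polyX) - 2 * (1 - polyX)^2"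
    using return_gf_ode_nth[of 1] unfolding Delta_mult_nth fps_deriv_Delta_mult_nth
    by (simp add: return_gf_nth_1[unfolded One_nat_def] numeral_2_eq_2 algebra_simps)
  also have "\<dots> = 4 * (2 * polyX)" by (simp add: power2_eq_square algebra_simps)
  finally show ?thesis by simp
qed

lemma return_gf_nth_recurrence:
  assumes "3 \<le> n"
  shows "of_nat n * return_gf $ n
     = (1 + polyX) * (of_nat (2*n-3) * return_gf $ (n-1)) - (1 - polyX)^2 * (of_nat (n-3) * return_gf $ (n-2))"
proof -
  define m where "m = n - 3"
  have n: "n = Suc (Suc (Suc m))"
    using assms by (simp add: m_def)
  have "2 * (of_nat n * return_gf $ n - 2 * (1 + polyX) * (of_nat (n-1) * return_gf $ (n-1))
      + (1 - polyX)^2 * (of_nat (n-2) * return_gf $ (n-2)))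
     = - 2 * (1 + polyX) * return_gf $ (n-1) + 2 * (1 - polyX)^2 * return_gf $ (n-2)"
    using return_gf_ode_nth[of "n-1"] unfolding Delta_mult_nth fps_deriv_Delta_mult_nth n
    by simp
  then show ?thesis
    unfolding n by (simp add: algebra_simps)
qed

section \<open>Coefficients of powers of the first-return series\<close>

lemma coeff_int_return_gf:
  assumes "2 \<le> n"
  shows "coeff_int (return_gf $ n) j = N_closed 0 (int n) j"
  using assms
proof (induction n arbitrary: j rule: less_induct)
  case (less n)
  let ?c = "\<lambda>m j. coeff_int (return_gf $ m) j"
  consider "n = 2" | "3 \<le> n" using less.prems by linarith
  then show ?case
  proof cases
    case 1
    consider "j \<le> 0" | "j = 1" | "2 \<le> j" by linarith
    then show ?thesis
      using 1 by cases (simp_all add: return_gf_nth_2 coeff_int_polyX N_closed_zero rfact_def fact_int_def)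
  next
    case 2
    have prev: "?c (n-1) i = N_closed 0 (int n - 1) i" for i
      using less.IH[of "n-1" i] 2 by (simp add: of_nat_diff)
    have prev2: "of_nat (n-3) * (?c (n-2) j - 2 * ?c (n-2) (j-1) + ?c (n-2) (j-2))
        = of_int (int n - 3) * (N_closed 0 (int n - 2) j - 2 * N_closed 0 (int n - 2) (j-1) + N_closed 0 (int n - 2) (j-2))"
    proof (cases "n = 3")
      case False
      then show ?thesis using less.IH[of "n-2"] 2 by (simp add: of_nat_diff)
    qed simp
    have coeff: "real (2*n-3) = of_int (2 * int n - 3)"
      using 2 by (simp add: of_nat_diff)
    have "of_nat n * ?c n j = of_nat (2*n-3) * (?c (n-1) j + ?c (n-1) (j-1))
        - of_nat (n-3) * (?c (n-2) j - 2 * ?c (n-2) (j-1) + ?c (n-2) (j-2))"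
      using arg_cong[OF return_gf_nth_recurrence[OF 2], of "\<lambda>p. coeff_int p j"]
      by (simp only: coeff_int_diff coeff_int_of_nat_mult coeff_int_one_plus_polyX_mult
          coeff_int_one_minus_polyX_sq_mult) (simp add: algebra_simps)
    also have "\<dots> = of_int (2 * int n - 3) * (N_closed 0 (int n - 1) j + N_closed 0 (int n - 1) (j-1))
        - of_int (int n - 3) * (N_closed 0 (int n - 2) j - 2 * N_closed 0 (int n - 2) (j-1) + N_closed 0 (int n - 2) (j-2))"
      unfolding prev prev2 coeff ..
    also have "\<dots> = of_nat n * N_closed 0 (int n) j"
      using N_closed_zero_recurrence[of "int n" j] 2 by simp
    finally show ?thesis using 2 by simp
  qed
qed

lemma return_gf_sq: "return_gf^2 = 2 * return_gf - 1 + Delta"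
  unfolding one_minus_return_gf_sq[symmetric] by algebra

lemma return_gf_power_nth_recurrence:
  assumes "2 \<le> n"
  shows "(return_gf ^ (m+2)) $ n = 2 * (return_gf ^ (m+1)) $ n - 2 * (1 + polyX) * (return_gf ^ m) $ (n-1)
     + (1 - polyX)^2 * (return_gf ^ m) $ (n-2)"
proof -
  have "return_gf ^ (m+2) = return_gf ^ m * (2 * return_gf - 1 + Delta)"
    by (simp only: power_add return_gf_sq)
  also have "\<dots> = 2 * return_gf ^ (m+1) - return_gf ^ m + Delta * return_gf ^ m"
    by (simp add: algebra_simps)
  finally have split: "return_gf ^ (m+2) = return_gf ^ (m+1) + return_gf ^ (m+1) - return_gf ^ m + Delta * return_gf ^ m"
    by (simp only: mult_2)
  have "(Delta * return_gf ^ m) $ n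
      = (return_gf ^ m) $ n - 2 * (1 + polyX) * (return_gf ^ m) $ (n-1) + (1 - polyX)^2 * (return_gf ^ m) $ (n-2)"
    using assms by (simp add: Delta_mult_nth)
  then show ?thesis
    unfolding split fps_add_nth fps_sub_nth by (simp only: mult_2 algebra_simps)
qed

lemma return_gf_sq_nth:
  assumes "3 \<le> n"
  shows "(return_gf^2) $ n = 2 * return_gf $ n"
proof -
  have "Delta $ n = 0" "(1 :: real poly fps) $ n = 0"
    using assms by (simp_all add: Delta_nth)
  then show ?thesis
    unfolding return_gf_sq mult_2 fps_add_nth fps_sub_nth by simp
qed

lemma coeff_int_return_gf_power:
  "k + 2 \<le> n \<Longrightarrow> coeff_int ((return_gf ^ Suc k) $ n) j = N_closed k (int n) j"
proof (induction k arbitrary: n j rule: induct_nat_012)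
  case 0
  then show ?case by (simp add: coeff_int_return_gf)
next
  case 1
  then have "(return_gf ^ Suc 1) $ n = 2 * return_gf $ n"
    using return_gf_sq_nth[of n] by (simp only: Suc_1)
  then show ?case
    using coeff_int_return_gf[of n j] 1 by (simp add: N_closed_one[unfolded One_nat_def])
next
  case (ge2 k)
  let ?c = "\<lambda>k m j. coeff_int ((return_gf ^ Suc k) $ m) j"
  have ge2_le: "2 \<le> n" using ge2.prems by simp
  have IH: "?c (k+1) n i = N_closed (k+1) (int n) i" "?c k (n-1) i = N_closed k (int n - 1) i"
    "?c k (n-2) i = N_closed k (int n - 2) i" for i
    using ge2.IH(2)[of n i] ge2.IH(1)[of "n-1" i] ge2.IH(1)[of "n-2" i] ge2.prems
    by (simp_all add: of_nat_diff)
  have exps: "Suc (k+2) = Suc k + 2" "Suc (k+1) = Suc k + 1" by simp_all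
  have "?c (k+2) n j = 2 * ?c (k+1) n j - 2 * (?c k (n-1) j + ?c k (n-1) (j-1))
      + (?c k (n-2) j - 2 * ?c k (n-2) (j-1) + ?c k (n-2) (j-2))"
    unfolding exps return_gf_power_nth_recurrence[of n "Suc k", OF ge2_le]
    by (simp only: coeff_int_diff coeff_int_add coeff_int_numeral_mult coeff_int_one_plus_polyX_mult
        coeff_int_one_minus_polyX_sq_mult mult.assoc)
  also have "\<dots> = N_closed (k+2) (int n) j"
    unfolding IH using N_closed_recurrence[of k "int n" j] ge2.prems by simp
  finally show ?case by (simp add: numeral_2_eq_2)
qed

section \<open>Lattice paths\<close>

definition vertex :: "bool list \<Rightarrow> nat \<Rightarrow> int \<times> int" where
  "vertex s t = (int (east_count (take t s)), int t - int (east_count (take t s)))"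

definition vertices :: "bool list \<Rightarrow> (int \<times> int) list" where
  "vertices s = map (vertex s) [0..<Suc (length s)]"

definition steps :: "(int \<times> int) list \<Rightarrow> nat \<Rightarrow> bool list" where
  "steps P n = map (\<lambda>i. fst (P ! Suc i) - fst (P ! i) = 1) [0..<n]"

lemma vertex_0: "vertex s 0 = (0, 0)"
  by (simp add: vertex_def east_count_def)

lemma vertex_Suc:
  "t < length s \<Longrightarrow> vertex s (Suc t) =
     (if s ! t then (fst (vertex s t) + 1, snd (vertex s t)) else (fst (vertex s t), snd (vertex s t) + 1))"
  by (simp add: vertex_def east_count_def take_Suc_conv_app_nth)

lemma vertex_sum: "fst (vertex s t) + snd (vertex s t) = int t"
  by (simp add: vertex_def)

lemma nth_vertices: "t \<le> length s \<Longrightarrow> vertices s ! t = vertex s t"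
  by (simp add: vertices_def nth_map_upt del: upt_Suc)

lemma set_vertices: "set (vertices s) = vertex s ` {0..length s}"
  by (auto simp: vertices_def atLeastAtMost_upt)

lemma lattice_path_steps:
  assumes "lattice_path n r P"
  shows "P = vertices (steps P n)" "length (steps P n) = n" "east_count (steps P n) = r"
proof -
  define s where "s = steps P n"
  have lP: "length P = n + 1" and P0: "P ! 0 = (0, 0)" and Pn: "P ! n = (int r, int n - int r)"
    and step: "\<And>i. i < n \<Longrightarrow> (fst (P ! Suc i) - fst (P ! i), snd (P ! Suc i) - snd (P ! i)) \<in> {(1, 0), (0, 1)}"
    using assms by (auto simp: lattice_path_def)
  have ls: "length s = n" by (simp add: s_def steps_def)
  have P_vertex: "t \<le> n \<Longrightarrow> P ! t = vertex s t" for t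
  proof (induction t)
    case 0
    then show ?case by (simp add: P0 vertex_0)
  next
    case (Suc t)
    then have "t < n" "s ! t \<longleftrightarrow> fst (P ! Suc t) - fst (P ! t) = 1" by (simp_all add: s_def steps_def)
    then show ?case
      using step[of t] vertex_Suc[of t s] ls Suc by (cases "P ! Suc t") auto
  qed
  show "P = vertices (steps P n)"
    unfolding s_def[symmetric]
    by (rule nth_equalityI) (simp_all add: lP ls vertices_def P_vertex nth_vertices del: upt_Suc)
  show "length (steps P n) = n" by (simp add: steps_def)
  show "east_count (steps P n) = r"
    using P_vertex[of n] Pn ls by (simp add: vertex_def s_def)
qed

lemma vertices_lattice_path:
  assumes "length s = n" "east_count s = r"
  shows "lattice_path n r (vertices s)" "steps (vertices s) n = s"
proof -
  have vn: "t \<le> n \<Longrightarrow> vertices s ! t = vertex s t" for t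
    using assms(1) by (simp add: nth_vertices)
  show "lattice_path n r (vertices s)"
    unfolding lattice_path_def
    using vn[of 0] vn[of n] assms vn vertex_Suc[of _ s]
    by (auto simp: vertices_def vertex_0 vertex_def east_count_def simp del: upt_Suc)
  show "steps (vertices s) n = s"
    by (rule nth_equalityI) (use assms(1) vn vertex_Suc[of _ s] in \<open>auto simp: steps_def\<close>)
qed

lemma meets_at_zip:
  "length s1 = length s2 \<Longrightarrow> meets_at (zip s1 s2) t \<longleftrightarrow> east_count (take t s1) = east_count (take t s2)"
  by (simp add: meets_at_def take_zip east1_zip east2_zip)

lemma vertex_eq_iff:
  assumes "length s1 = length s2"
  shows "vertex s1 t1 = vertex s2 t2 \<longleftrightarrow> t1 = t2 \<and> meets_at (zip s1 s2) t1"
proof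
  assume eq: "vertex s1 t1 = vertex s2 t2"
  then have "int t1 = int t2"
    using vertex_sum[of s1 t1] vertex_sum[of s2 t2] by simp
  then show "t1 = t2 \<and> meets_at (zip s1 s2) t1"
    using eq assms by (simp add: meets_at_zip vertex_def)
qed (use assms in \<open>auto simp: meets_at_zip vertex_def\<close>)

lemma inj_vertex: "inj (vertex s)"
proof (rule injI)
  fix x y
  assume "vertex s x = vertex s y"
  then have "int x = int y"
    by (metis vertex_sum)
  then show "x = y" by simp
qed

lemma card_common_inner_vertices:
  assumes "length s1 = n" "length s2 = n" "east_count s1 = r" "east_count s2 = r" "1 \<le> n"
  shows "card ((set (vertices s1) \<inter> set (vertices s2)) - {(0, 0), (int r, int n - int r)}) = meetings (zip s1 s2)"
proof -
  let ?M = "{t \<in> {1..<n}. meets_at (zip s1 s2) t}"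
  have "length s1 = length s2" using assms by simp
  note vertex_eq = vertex_eq_iff[OF this]
  have ends: "vertex s1 t = (0, 0) \<longleftrightarrow> t = 0" "vertex s1 t = (int r, int n - int r) \<longleftrightarrow> t = n"
    if "t \<le> n" for t
    using vertex_sum[of s1 t] that assms by (auto simp: vertex_def east_count_def)
  have "(set (vertices s1) \<inter> set (vertices s2)) - {(0, 0), (int r, int n - int r)} = vertex s1 ` ?M"
  proof (intro set_eqI iffI)
    fix p
    assume p: "p \<in> (set (vertices s1) \<inter> set (vertices s2)) - {(0, 0), (int r, int n - int r)}"
    then obtain t1 t2 where t: "t1 \<le> n" "p = vertex s1 t1" "p = vertex s2 t2"
      using assms by (auto simp: set_vertices)
    then have "meets_at (zip s1 s2) t1"
      using vertex_eq by metis
    moreover have "t1 \<noteq> 0" "t1 \<noteq> n"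
      using p t ends by auto
    ultimately show "p \<in> vertex s1 ` ?M" using t by auto
  next
    fix p
    assume "p \<in> vertex s1 ` ?M"
    then obtain t where t: "1 \<le> t" "t < n" "meets_at (zip s1 s2) t" "p = vertex s1 t"
      by auto
    have p2: "p = vertex s2 t" using vertex_eq t by blast
    have "p \<in> set (vertices s1)" "p \<in> set (vertices s2)"
      unfolding set_vertices assms(1,2)
      using t p2 by (auto intro!: image_eqI[where x = t])
    moreover have "p \<noteq> (0, 0)" "p \<noteq> (int r, int n - int r)"
      using t ends by auto
    ultimately show "p \<in> (set (vertices s1) \<inter> set (vertices s2)) - {(0, 0), (int r, int n - int r)}"
      by blast
  qed
  moreover have "inj_on (vertex s1) ?M"
    using inj_vertex by (rule inj_on_subset) simp
  ultimately show ?thesis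
    using assms by (simp add: card_image meetings_def)
qed

lemma N_paths_eq_card:
  assumes "1 \<le> n"
  shows "N_paths k n r = card {xs \<in> coterminal n. meetings xs = k \<and> east1 xs = r}"
proof -
  let ?A = "{(P, Q). lattice_path n r P \<and> lattice_path n r Q \<and>
      card ((set P \<inter> set Q) - {(0, 0), (int r, int n - int r)}) = k}"
  let ?B = "{xs \<in> coterminal n. meetings xs = k \<and> east1 xs = r}"
  have into_B: "zip (steps P n) (steps Q n) \<in> ?B" if "(P, Q) \<in> ?A" for P Q
  proof -
    from that have P: "lattice_path n r P" and Q: "lattice_path n r Q"
      and k: "card ((set P \<inter> set Q) - {(0, 0), (int r, int n - int r)}) = k"
      by auto
    note sP = lattice_path_steps[OF P] and sQ = lattice_path_steps[OF Q]
    show ?thesis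
      using card_common_inner_vertices[OF sP(2) sQ(2) sP(3) sQ(3) assms] k sP sQ
      by (simp add: coterminal_def east1_zip east2_zip)
  qed
  have into_A: "(vertices (map fst xs), vertices (map snd xs)) \<in> ?A" if "xs \<in> ?B" for xs
  proof -
    from that have len: "length (map fst xs) = n" "length (map snd xs) = n"
      and cnt: "east_count (map fst xs) = r" "east_count (map snd xs) = r"
      by (auto simp: coterminal_def east1_map east2_map)
    show ?thesis
      using vertices_lattice_path[OF len(1) cnt(1)] vertices_lattice_path[OF len(2) cnt(2)]
        card_common_inner_vertices[OF len cnt assms] that
      by (simp add: zip_map_fst_snd)
  qed
  have "bij_betw (\<lambda>(P, Q). zip (steps P n) (steps Q n)) ?A ?B"
    by (rule bij_betw_byWitness[where f' = "\<lambda>xs. (vertices (map fst xs), vertices (map snd xs))"])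
      (use into_A into_B lattice_path_steps in \<open>auto simp: coterminal_def vertices_lattice_path
        east1_map east2_map zip_map_fst_snd\<close>)
  then show ?thesis
    unfolding N_paths_def by (rule bij_betw_same_card)
qed

lemma binom_summand_eq_hterm:
  fixes n r k i :: nat
  assumes "2 * i \<le> k" "k + 2 \<le> n" "1 \<le> r"
  shows "2 * (real k + 1) / real r * ((-1) ^ i *
       (binom (int k) (int i) * binom (int k - int i) (int i) *
        binom (int n - int i - 2) (int r - 1) * binom (int n - int i - 1) (int r - int i - 1))
       / binom (int n - int i - 2) (int i))
     = 2 * fact (k + 1) * rfact (int r) * rfact (int n - int r) * ((-1) ^ i * hterm (int k) (int n) (int r) (int i))"
proof -
  define I K N R where "I = int i" and "K = int k" and "N = int n" and "R = int r"
  have ineqs: "0 \<le> I" "2 * I \<le> K" "K + 2 \<le> N" "1 \<le> R"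
    using assms by (simp_all add: I_def K_def N_def R_def)
  have binoms:
    "binom K I = fact_int K * rfact I * rfact (K - I)"
    "binom (K - I) I = fact_int (K - I) * rfact I * rfact (K - 2*I)"
    "binom (N - I - 2) (R - 1) = fact_int (N - I - 2) * rfact (R - 1) * rfact (N - R - I - 1)"
    "binom (N - I - 1) (R - I - 1) = fact_int (N - I - 1) * rfact (R - I - 1) * rfact (N - R)"
    "binom (N - I - 2) I = fact_int (N - I - 2) * rfact I * rfact (N - 2*I - 2)"
    using ineqs by (simp_all add: binom_eq_fact_int_rfact algebra_simps)
  have inverses: "fact_int (K - I) * rfact (K - I) = 1" "fact_int (N - 2*I - 2) * rfact (N - 2*I - 2) = 1"
    using ineqs by (simp_all add: fact_int_rfact)
  have "rfact (R - 1) = of_int R * rfact R"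
    by (rule rfact_pred) simp
  then have num: "binom K I * binom (K - I) I * binom (N - I - 2) (R - 1) * binom (N - I - 1) (R - I - 1)
      = binom (N - I - 2) I * (of_int R * fact_int K * rfact R * rfact (N - R) * hterm K N R I)"
    unfolding binoms hterm_def using inverses by algebra
  have "binom (N - I - 2) I \<noteq> 0"
    unfolding binoms using ineqs fact_int_pos[of "N - I - 2"] rfact_pos[of I] rfact_pos[of "N - 2*I - 2"] by simp
  moreover have "fact (k + 1) = (real k + 1) * fact_int K"
    by (simp add: K_def fact_int_def)
  ultimately show ?thesis
    using num assms(3) unfolding I_def[symmetric] K_def[symmetric] N_def[symmetric] R_def[symmetric]
    by (simp add: R_def field_simps)
qed

lemma N_closed_eq_binom_sum:
  fixes n r k :: nat
  assumes "k + 2 \<le> n" and "1 \<le> r"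
  shows "N_closed k (int n) (int r) = 2 * (real k + 1) / real r *
    (\<Sum>i = 0..k div 2. (-1) ^ i *
       (binom (int k) (int i) * binom (int k - int i) (int i) *
        binom (int n - int i - 2) (int r - 1) * binom (int n - int i - 1) (int r - int i - 1))
       / binom (int n - int i - 2) (int i))"
  unfolding N_closed_def hsum_def sum_distrib_left
  by (rule sum.cong) (use assms binom_summand_eq_hterm in auto)

theorem mainTheorem2:
  fixes n r k :: nat
  assumes "n \<ge> 2" and "1 \<le> r" and "r \<le> n" and "k \<le> n - 2"
  shows "real (N_paths k n r) =
    2 * (real k + 1) / real r *
    (\<Sum>i = 0..k div 2. (-1) ^ i *
       (binom (int k) (int i) * binom (int k - int i) (int i) *
        binom (int n - int i - 2) (int r - 1) * binom (int n - int i - 1) (int r - int i - 1))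
       / binom (int n - int i - 2) (int i))"
proof -
  have "real (N_paths k n r) = coeff (meeting_poly k n) r"
    using assms by (simp add: N_paths_eq_card coeff_meeting_poly)
  also have "\<dots> = coeff_int ((return_gf ^ Suc k) $ n) (int r)"
    using assms by (simp add: meeting_poly_eq_power coeff_int_def)
  also have "\<dots> = N_closed k (int n) (int r)"
    using assms by (intro coeff_int_return_gf_power) linarith
  finally show ?thesis
    using assms by (simp add: N_closed_eq_binom_sum)
qed

end
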